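(* Let $S$ and $T$ be disjoint nonempty finite sets, and suppose $L=M\mathbin{\Box} N=P\mathbin{\Box} Q$, where $M$ is a matroid on $S$, $N$ a matroid on $T$, $P$ a matroid on $T$ and $Q$ a matroid on $S$. Then $L$ is a uniform matroid.
   Context: For a matroid $M$ on $S$ write $\rho_M$ for rank, $\rho(M)=\rho_M(S)$, $\nu_M(A)=|A|-\rho_M(A)$, $\lambda_M(A)=\rho(M)-\rho_M(A)$. For matroids $M$ on $S$ and $N$ on $T$ with $S\cap T=\emptyset$, the free product $M\mathbin{\Box} N$ is the matroid on $S\cup T$ whose independent sets are those $A$ with $A\cap S$ independent in $M$ and $\lambda_M(A\cap S)\geq\nu_N(A\cap T)$. *)

theory Defs
  imports Main
begin

definition matroid :: "'a set \<Rightarrow> ('a set \<Rightarrow> bool) \<Rightarrow> bool" where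
  "matroid E indep \<longleftrightarrow>
     finite E \<and> indep {} \<and> (\<forall>X. indep X \<longrightarrow> X \<subseteq> E) \<and>
     (\<forall>X Y. indep X \<and> Y \<subseteq> X \<longrightarrow> indep Y) \<and>
     (\<forall>X Y. indep X \<and> indep Y \<and> card X < card Y \<longrightarrow> (\<exists>y\<in>Y - X. indep (insert y X)))"

definition rk :: "('a set \<Rightarrow> bool) \<Rightarrow> 'a set \<Rightarrow> nat" where
  "rk indep A = Max {card X | X. X \<subseteq> A \<and> indep X}"

definition nullity :: "('a set \<Rightarrow> bool) \<Rightarrow> 'a set \<Rightarrow> int" where
  "nullity indep A = int (card A) - int (rk indep A)"

definition corank_gap :: "'a set \<Rightarrow> ('a set \<Rightarrow> bool) \<Rightarrow> 'a set \<Rightarrow> int" where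
  "corank_gap E indep A = int (rk indep E) - int (rk indep A)"

definition free_product ::
  "'a set \<Rightarrow> ('a set \<Rightarrow> bool) \<Rightarrow> 'a set \<Rightarrow> ('a set \<Rightarrow> bool) \<Rightarrow> 'a set \<Rightarrow> bool" where
  "free_product S M T N A \<longleftrightarrow>
     A \<subseteq> S \<union> T \<and> M (A \<inter> S) \<and> corank_gap S M (A \<inter> S) \<ge> nullity N (A \<inter> T)"

definition uniform_matroid :: "'a set \<Rightarrow> ('a set \<Rightarrow> bool) \<Rightarrow> bool" where
  "uniform_matroid E indep \<longleftrightarrow> (\<exists>r::nat. \<forall>A. indep A \<longleftrightarrow> A \<subseteq> E \<and> card A \<le> r)"

end

theory Submission
  imports Defs
begin

text \<open>
  If M has a dependent set, choose an independent D and an element c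
  with D + c dependent. Testing D + c and D + t (for t \<in> T)
  against both factorisations shows that every element of T is a loop of N and
  that |D| = r(M); hence M is uniform, N has rank 0 and
  M \<box> N is uniform. The same holds with the roles of the factorisations exchanged if
  P has a dependent set. Otherwise M and P are free, and for
  Y \<subseteq> T the set S \<union> Y is independent in L iff Y is independent
  in N (first factorisation) iff |Y| \<le> |T| + r(Q) - |S| (second one); so
  N is uniform, and the free product of a free and a uniform matroid is uniform.
\<close>

lemma matroid_finite: "matroid E I \<Longrightarrow> finite E"
  unfolding matroid_def by blast

lemma matroid_indep_empty: "matroid E I \<Longrightarrow> I {}"
  unfolding matroid_def by blast

lemma matroid_indep_ground: "matroid E I \<Longrightarrow> I X \<Longrightarrow> X \<subseteq> E"
  unfolding matroid_def by blast

lemma matroid_indep_subset: "matroid E I \<Longrightarrow> I Y \<Longrightarrow> X \<subseteq> Y \<Longrightarrow> I X"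
  unfolding matroid_def by blast

lemma finite_rk_candidates: "finite X \<Longrightarrow> finite {card Z |Z. Z \<subseteq> X \<and> I Z}"
  by (rule finite_subset[of _ "card ` Pow X"]) auto

lemma rk_attained:
  assumes "finite X" "I {}"
  obtains Z where "Z \<subseteq> X" "I Z" "card Z = rk I X"
proof -
  have "{card Z |Z. Z \<subseteq> X \<and> I Z} \<noteq> {}"
    using assms(2) by blast
  then have "rk I X \<in> {card Z |Z. Z \<subseteq> X \<and> I Z}"
    unfolding rk_def using finite_rk_candidates[OF assms(1)] by (intro Max_in)
  then show thesis using that by auto
qed

lemma card_le_rk: "finite X \<Longrightarrow> Z \<subseteq> X \<Longrightarrow> I Z \<Longrightarrow> card Z \<le> rk I X"
  unfolding rk_def by (rule Max_ge[OF finite_rk_candidates]) auto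

lemma rk_le_card:
  assumes "finite X" "I {}"
  shows "rk I X \<le> card X"
proof -
  obtain Z where "Z \<subseteq> X" "card Z = rk I X"
    using rk_attained[of X I] assms by blast
  then show ?thesis using card_mono[OF assms(1), of Z] by simp
qed

lemma rk_mono:
  assumes "finite Y" "X \<subseteq> Y" "I {}"
  shows "rk I X \<le> rk I Y"
proof -
  obtain Z where "Z \<subseteq> X" "I Z" "card Z = rk I X"
    using rk_attained[of X I] finite_subset[OF assms(2,1)] assms(3) by blast
  then show ?thesis using card_le_rk[of Y Z I] assms(1,2) by simp
qed

lemma rk_indep: "finite X \<Longrightarrow> I {} \<Longrightarrow> I X \<Longrightarrow> rk I X = card X"
  using card_le_rk[of X X I] rk_le_card[of X I] by simp

lemma indep_iff_card_le_rk:
  assumes "finite X" "I {}"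
  shows "I X \<longleftrightarrow> card X \<le> rk I X"
proof
  assume le: "card X \<le> rk I X"
  obtain Z where Z: "Z \<subseteq> X" "I Z" "card Z = rk I X"
    using rk_attained[of X I] assms by blast
  then have "Z = X"
    using card_subset_eq[OF assms(1) Z(1)] card_mono[OF assms(1) Z(1)] le by simp
  with Z show "I X" by simp
next
  assume "I X"
  then show "card X \<le> rk I X"
    using rk_indep[of X I] assms by simp
qed

lemma nullity_nonpos_iff_indep:
  "finite X \<Longrightarrow> I {} \<Longrightarrow> nullity I X \<le> 0 \<longleftrightarrow> I X"
  unfolding nullity_def using indep_iff_card_le_rk[of X I] by simp

lemma nullity_insert_le:
  assumes "finite X" "I {}"
  shows "nullity I (insert x X) \<le> nullity I X + 1"
proof -
  have "card (insert x X) \<le> card X + 1"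
    using assms(1) by (simp add: card_insert_if)
  moreover have "rk I X \<le> rk I (insert x X)"
    using assms by (intro rk_mono) auto
  ultimately show ?thesis unfolding nullity_def by linarith
qed

lemma dependent_obtain_indep_insert:
  assumes "finite X" "I {}" "\<not> I X"
  obtains D c where "D \<subseteq> X" "I D" "c \<in> X - D" "\<not> I (insert c D)"
proof -
  obtain D where D: "D \<subseteq> X" "I D" "card D = rk I X"
    using rk_attained[of X I] assms by blast
  then obtain c where c: "c \<in> X - D"
    using assms(3) by (metis Diff_eq_empty_iff ex_in_conv subset_antisym)
  have "\<not> I (insert c D)"
  proof
    assume "I (insert c D)"
    then have "card (insert c D) \<le> rk I X"
      using D(1) c assms(1) by (intro card_le_rk) auto
    then show False
      using D c finite_subset[OF D(1) assms(1)] by simp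
  qed
  then show thesis using that D c by blast
qed

definition uniform_of_rank :: "'a set \<Rightarrow> nat \<Rightarrow> ('a set \<Rightarrow> bool) \<Rightarrow> bool" where
  "uniform_of_rank E r I \<longleftrightarrow> (\<forall>X. I X \<longleftrightarrow> X \<subseteq> E \<and> card X \<le> r)"

lemma rk_uniform_of_rank:
  assumes "uniform_of_rank E r I" "finite Y" "Y \<subseteq> E"
  shows "rk I Y = min (card Y) r"
proof (rule antisym)
  have I: "I X \<longleftrightarrow> X \<subseteq> E \<and> card X \<le> r" for X
    using assms(1) unfolding uniform_of_rank_def by blast
  have "I {}"
    using I by simp
  then obtain Z where Z: "Z \<subseteq> Y" "I Z" "card Z = rk I Y"
    using rk_attained[of Y I] assms(2) by blast
  then show "rk I Y \<le> min (card Y) r"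
    using I[of Z] card_mono[OF assms(2) Z(1)] by simp
  obtain W where W: "W \<subseteq> Y" "card W = min (card Y) r"
    using obtain_subset_with_card_n[of "min (card Y) r" Y] by auto
  then have "I W"
    using I[of W] assms(3) by simp
  then show "min (card Y) r \<le> rk I Y"
    using card_le_rk[OF assms(2) W(1)] W(2) by simp
qed

lemma uniform_of_rank_free: "matroid E I \<Longrightarrow> I E \<Longrightarrow> uniform_of_rank E (card E) I"
  unfolding uniform_of_rank_def
  by (meson card_mono matroid_finite matroid_indep_ground matroid_indep_subset)

text \<open>The last hypothesis cannot be dropped: U(1,2) \<box> U(1,1) is not uniform.\<close>

lemma uniform_matroid_free_product:
  assumes disj: "S \<inter> T = {}" and fin: "finite S" "finite T"
    and M: "uniform_of_rank S r M" and N: "uniform_of_rank T k N"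
    and "r \<le> card S" and "r = card S \<or> k = 0"
  shows "uniform_matroid (S \<union> T) (free_product S M T N)"
proof -
  have "free_product S M T N A \<longleftrightarrow> A \<subseteq> S \<union> T \<and> card A \<le> r + k" for A
  proof (cases "A \<subseteq> S \<union> T")
    case True
    have "card A = card ((A \<inter> S) \<union> (A \<inter> T))"
      using True by (simp add: Int_absorb2 flip: Int_Un_distrib)
    also have "\<dots> = card (A \<inter> S) + card (A \<inter> T)"
      using disj fin by (intro card_Un_disjoint) auto
    finally have "card A = card (A \<inter> S) + card (A \<inter> T)" .
    moreover have "card (A \<inter> S) \<le> card S"
      using card_mono[OF fin(1)] by simp
    moreover have "rk M S = r" "rk M (A \<inter> S) = min (card (A \<inter> S)) r"
      "rk N (A \<inter> T) = min (card (A \<inter> T)) k"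
      using rk_uniform_of_rank[OF M] rk_uniform_of_rank[OF N] fin \<open>r \<le> card S\<close> by auto
    moreover have "M (A \<inter> S) \<longleftrightarrow> card (A \<inter> S) \<le> r"
      using M unfolding uniform_of_rank_def by blast
    ultimately show ?thesis
      using True \<open>r = card S \<or> k = 0\<close>
      unfolding free_product_def corank_gap_def nullity_def by auto
  qed (simp add: free_product_def)
  then show ?thesis
    unfolding uniform_matroid_def by blast
qed

locale double_free_product =
  fixes S T :: "'a set" and M N P Q L :: "'a set \<Rightarrow> bool"
  assumes disjoint: "S \<inter> T = {}"
    and matroid_M: "matroid S M" and matroid_N: "matroid T N"
    and matroid_P: "matroid T P" and matroid_Q: "matroid S Q"
    and L_MN: "L = free_product S M T N" and L_PQ: "L = free_product T P S Q"
begin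

lemma finite_S: "finite S" and finite_T: "finite T"
  using matroid_finite matroid_M matroid_N by blast+

lemma dependent_insert_forces_loops:
  assumes D: "D \<subseteq> S" "M D" and c: "c \<in> S" "\<not> M (insert c D)" and t: "t \<in> T"
  shows "\<not> N {t}" and "card D = rk M S"
proof -
  have finD: "finite D"
    using finite_subset[OF D(1) finite_S] .
  have P0: "P {}" and Q0: "Q {}" and M0: "M {}" and N0: "N {}"
    using matroid_indep_empty matroid_M matroid_N matroid_P matroid_Q by blast+
  have "\<not> L (insert c D)"
    using c D(1) unfolding L_MN free_product_def by (simp add: Int_absorb2)
  moreover have "insert c D \<inter> T = {}" "insert c D \<inter> S = insert c D"
    using D(1) c(1) disjoint by blast+
  ultimately have "int (rk P T) < nullity Q (insert c D)"
    using D(1) c(1) P0 rk_indep[of "{}" P]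
    unfolding L_PQ free_product_def corank_gap_def by auto
  then have rkP: "int (rk P T) \<le> nullity Q D"
    using nullity_insert_le[of D Q c] finD Q0 by linarith
  have parts: "insert t D \<inter> S = D" "insert t D \<inter> T = {t}"
    using D(1) t disjoint by blast+
  have "\<not> L (insert t D)"
  proof
    assume "L (insert t D)"
    then have "P {t}" "corank_gap T P {t} \<ge> nullity Q D"
      unfolding L_PQ free_product_def parts by auto
    then show False
      using rkP rk_indep[of "{t}" P] P0 unfolding corank_gap_def by simp
  qed
  then have "int (rk M S) - int (rk M D) < nullity N {t}"
    using D t unfolding L_MN free_product_def parts corank_gap_def by auto
  moreover have "rk M D = card D" "rk M D \<le> rk M S"
    using rk_indep[of D M] rk_mono[of S D M] finD M0 D finite_S by auto
  moreover have "nullity N {t} \<le> 1"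
    using rk_le_card[of "{t}" N] N0 unfolding nullity_def by simp
  ultimately have "0 < nullity N {t}" "card D = rk M S"
    by linarith+
  then show "\<not> N {t}" and "card D = rk M S"
    using nullity_nonpos_iff_indep[of "{t}" N] N0 by auto
qed

lemma M_uniform:
  assumes "T \<noteq> {}"
  shows "uniform_of_rank S (rk M S) M"
  unfolding uniform_of_rank_def
proof (intro allI iffI)
  fix X
  assume "M X"
  then show "X \<subseteq> S \<and> card X \<le> rk M S"
    using matroid_indep_ground[OF matroid_M] card_le_rk[OF finite_S] by blast
next
  fix X
  assume X: "X \<subseteq> S \<and> card X \<le> rk M S"
  then have finX: "finite X"
    using finite_subset finite_S by blast
  obtain t where "t \<in> T"
    using assms by blast
  show "M X"
  proof (rule ccontr)
    assume "\<not> M X"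
    then obtain D c where D: "D \<subseteq> X" "M D" "c \<in> X - D" "\<not> M (insert c D)"
      using dependent_obtain_indep_insert[of X M] finX matroid_indep_empty[OF matroid_M]
      by blast
    then have "card D < card X"
      using finX by (intro psubset_card_mono) auto
    moreover have "card D = rk M S"
      using dependent_insert_forces_loops(2)[of D c t] D X \<open>t \<in> T\<close> by auto
    ultimately show False
      using X by linarith
  qed
qed

lemma N_rank_zero_if_M_dependent:
  assumes "T \<noteq> {}" "\<not> M S"
  shows "uniform_of_rank T 0 N"
proof -
  obtain D c where "D \<subseteq> S" "M D" "c \<in> S - D" "\<not> M (insert c D)"
    using dependent_obtain_indep_insert[of S M] finite_S matroid_indep_empty[OF matroid_M]
      assms(2) by blast
  then have loop: "\<not> N {t}" if "t \<in> T" for t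
    using dependent_insert_forces_loops(1)[of D c t] that by blast
  have "N X \<longleftrightarrow> X = {}" for X
  proof
    assume "N X"
    show "X = {}"
    proof (rule ccontr)
      assume "X \<noteq> {}"
      then obtain x where "x \<in> X"
        by blast
      then have "N {x}" "x \<in> T"
        using \<open>N X\<close> matroid_indep_subset[OF matroid_N] matroid_indep_ground[OF matroid_N]
        by blast+
      then show False
        using loop by blast
    qed
  qed (simp add: matroid_indep_empty[OF matroid_N])
  moreover have "card X = 0 \<longleftrightarrow> X = {}" if "X \<subseteq> T" for X
    using finite_subset[OF that finite_T] by simp
  ultimately show ?thesis
    unfolding uniform_of_rank_def by auto
qed

lemma N_uniform_if_free:
  assumes "M S" "P T"
  shows "uniform_of_rank T (card T + rk Q S - card S) N"
proof -
  have N_iff: "N Y \<longleftrightarrow> card Y + card S \<le> card T + rk Q S" if Y: "Y \<subseteq> T" for Y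
  proof -
    have finY: "finite Y"
      using finite_subset[OF Y finite_T] .
    have parts: "(S \<union> Y) \<inter> S = S" "(S \<union> Y) \<inter> T = Y"
      using Y disjoint by blast+
    have "L (S \<union> Y) \<longleftrightarrow> nullity N Y \<le> 0"
      using Y assms(1) unfolding L_MN free_product_def parts corank_gap_def by auto
    also have "\<dots> \<longleftrightarrow> N Y"
      using nullity_nonpos_iff_indep[of Y N] finY matroid_indep_empty[OF matroid_N] by simp
    finally have "L (S \<union> Y) \<longleftrightarrow> N Y" .
    moreover have "P Y"
      using matroid_indep_subset[OF matroid_P assms(2) Y] .
    then have "L (S \<union> Y) \<longleftrightarrow> card Y + card S \<le> card T + rk Q S"
      using Y rk_indep[of Y P] rk_indep[of T P] finY assms(2) finite_T
        matroid_indep_empty[OF matroid_P]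
      unfolding L_PQ free_product_def parts corank_gap_def nullity_def by auto
    ultimately show ?thesis by simp
  qed
  then have "card S \<le> card T + rk Q S"
    using N_iff[of "{}"] matroid_indep_empty[OF matroid_N] by simp
  then have "N X \<longleftrightarrow> X \<subseteq> T \<and> card X \<le> card T + rk Q S - card S" for X
    using N_iff[of X] matroid_indep_ground[OF matroid_N, of X] by auto
  then show ?thesis
    unfolding uniform_of_rank_def by blast
qed

lemma L_uniform_if_M_dependent:
  assumes "T \<noteq> {}" "\<not> M S"
  shows "uniform_matroid (S \<union> T) L"
  unfolding L_MN
  using uniform_matroid_free_product[OF disjoint finite_S finite_T M_uniform[OF assms(1)]
      N_rank_zero_if_M_dependent[OF assms]]
    rk_le_card[of S M] finite_S matroid_indep_empty[OF matroid_M] by blast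

lemma L_uniform_if_free:
  assumes "M S" "P T"
  shows "uniform_matroid (S \<union> T) L"
  unfolding L_MN
  using uniform_matroid_free_product[OF disjoint finite_S finite_T
      uniform_of_rank_free[OF matroid_M assms(1)] N_uniform_if_free[OF assms]] by blast

end

theorem corollary6p6:
  fixes S T :: "'a set" and M N P Q L :: "'a set \<Rightarrow> bool"
  assumes "finite S" and "finite T" and "S \<noteq> {}" and "T \<noteq> {}" and "S \<inter> T = {}"
    and "matroid S M" and "matroid T N" and "matroid T P" and "matroid S Q"
    and "L = free_product S M T N" and "L = free_product T P S Q"
  shows "uniform_matroid (S \<union> T) L"
proof -
  interpret double_free_product S T M N P Q L
    using assms by unfold_locales
  interpret swapped: double_free_product T S P Q M N L
    using assms by unfold_locales auto
  consider "\<not> M S" | "\<not> P T" | "M S" "P T"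
    by blast
  then show ?thesis
  proof cases
    case 1
    then show ?thesis using L_uniform_if_M_dependent \<open>T \<noteq> {}\<close> by blast
  next
    case 2
    then show ?thesis
      using swapped.L_uniform_if_M_dependent \<open>S \<noteq> {}\<close> by (simp add: Un_commute)
  next
    case 3
    then show ?thesis by (rule L_uniform_if_free)
  qed
qed

end
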